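(* Let $d\ge1$, $D=\{1,\dots,d\}$, let $\Pi=(\Pi_{ij})$ and $Q$ be $d\times d$ stochastic matrices indexed by $D$, let $\pi=(\pi_j)_{j\in D}$ be a probability vector, and let $\varphi^{(O)}_H$ be the quantum Markov chain on $\mathcal{A}_H=\bigotimes_{\mathbb{N}}\mathcal{M}_d$ with initial state $\varphi_{H,0}(\cdot)=\operatorname{Tr}(W_0\,\cdot)$, $W_0=\sum_{j\in D}\pi_je_{jj}$, and transition expectation $\mathcal{E}^{(O)}_H(a\otimes b)=a\diamond P_{H,O}(\mathbf{1}_d)\diamond P_H(b)$. Then for all $n\in\mathbb{N}$ and $j_0,\dots,j_n\in D$, $$\varphi^{(O)}_H\Big(\prod_{m=0}^nj_{H_m}(e_{j_mj_m})\Big)=\pi_{j_0}\prod_{m=0}^{n-1}\Pi_{j_mj_{m+1}}.$$ That is, the restriction of $\varphi^{(O)}_H$ to the diagonal algebra $\bigotimes_{\mathbb{N}}\mathcal{D}_e$ is the classical Markov chain with initial distribution $\pi$ and transition matrix $\Pi$.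
   Context: $\mathcal{M}_d$: complex $d\times d$ matrices with identity $\mathbf{1}_d$ and matrix units $e_{ij}$; $\mathcal{D}_e=\{\sum_hx_he_{hh}\}$ is its diagonal subalgebra. $\diamond$ is the Schur (entrywise) product; stochastic matrices have nonnegative entries and row sums $1$. $P_H(A)=\sum_{i,j,k,l\in D}\sqrt{\Pi_{ik}\Pi_{jl}}\,a_{kl}e_{ij}$, $P_{H,O}(B)=\sum_{i,j,k,l\in D}\sqrt{Q_{ik}Q_{jl}}\,b_{kl}e_{ij}$. $j_{H_m}(a)$ denotes $a$ at site $m$ of $\mathcal{A}_H$ with identities elsewhere, and $\varphi^{(O)}_H(j_{H_0}(a_0)\cdots j_{H_n}(a_n))=\varphi_{H,0}(\mathcal{E}^{(O)}_H(a_0\otimes\mathcal{E}^{(O)}_H(a_1\otimes\cdots\mathcal{E}^{(O)}_H(a_n\otimes\mathbf{1}_d)\cdots)))$. *)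

theory Defs
  imports Complex_Main
begin

text \<open>d x d complex matrices indexed by D = {1..d}, represented as functions
  nat => nat => complex; only entries with indices in D are meaningful.\<close>
type_synonym cmat = "nat \<Rightarrow> nat \<Rightarrow> complex"

definition idx :: "nat \<Rightarrow> nat set" where
  "idx d = {1..d}"

definition stochastic :: "nat \<Rightarrow> (nat \<Rightarrow> nat \<Rightarrow> real) \<Rightarrow> bool" where
  "stochastic d P \<longleftrightarrow> (\<forall>i\<in>idx d. \<forall>j\<in>idx d. 0 \<le> P i j) \<and>
                       (\<forall>i\<in>idx d. (\<Sum>j\<in>idx d. P i j) = 1)"

definition prob_vector :: "nat \<Rightarrow> (nat \<Rightarrow> real) \<Rightarrow> bool" where
  "prob_vector d p \<longleftrightarrow> (\<forall>j\<in>idx d. 0 \<le> p j) \<and> (\<Sum>j\<in>idx d. p j) = 1"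

definition munit :: "nat \<Rightarrow> nat \<Rightarrow> cmat" where
  "munit i j = (\<lambda>k l. if k = i \<and> l = j then 1 else 0)"

definition mone :: cmat where
  "mone = (\<lambda>k l. if k = l then 1 else 0)"

definition schur :: "cmat \<Rightarrow> cmat \<Rightarrow> cmat" where
  "schur A B = (\<lambda>i j. A i j * B i j)"

definition mmult :: "nat \<Rightarrow> cmat \<Rightarrow> cmat \<Rightarrow> cmat" where
  "mmult d A B = (\<lambda>i j. \<Sum>k\<in>idx d. A i k * B k j)"

definition mtrace :: "nat \<Rightarrow> cmat \<Rightarrow> complex" where
  "mtrace d A = (\<Sum>i\<in>idx d. A i i)"

text \<open>P(A) = sum_{i,j,k,l} sqrt(S_ik S_jl) a_kl e_ij, used both for P_H (S = Pi)
  and P_{H,O} (S = Q).\<close>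
definition Pmap :: "nat \<Rightarrow> (nat \<Rightarrow> nat \<Rightarrow> real) \<Rightarrow> cmat \<Rightarrow> cmat" where
  "Pmap d S A = (\<lambda>i j. \<Sum>k\<in>idx d. \<Sum>l\<in>idx d.
        complex_of_real (sqrt (S i k * S j l)) * A k l)"

definition transE :: "nat \<Rightarrow> (nat \<Rightarrow> nat \<Rightarrow> real) \<Rightarrow> (nat \<Rightarrow> nat \<Rightarrow> real)
                      \<Rightarrow> cmat \<Rightarrow> cmat \<Rightarrow> cmat" where
  "transE d Pi Q a b = schur (schur a (Pmap d Q mone)) (Pmap d Pi b)"

definition W0 :: "(nat \<Rightarrow> real) \<Rightarrow> cmat" where
  "W0 p = (\<lambda>i j. if i = j then complex_of_real (p i) else 0)"

text \<open>Value of the quantum Markov chain phi_H^(O) on the localized product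
  j_{H_0}(a_0) ... j_{H_n}(a_n), where the list is [a_0, ..., a_n]:
  phi_{H,0}(E(a_0 \<otimes> E(a_1 \<otimes> ... E(a_n \<otimes> 1)...))).\<close>
definition qmc_phi :: "nat \<Rightarrow> (nat \<Rightarrow> nat \<Rightarrow> real) \<Rightarrow> (nat \<Rightarrow> nat \<Rightarrow> real)
                       \<Rightarrow> (nat \<Rightarrow> real) \<Rightarrow> cmat list \<Rightarrow> complex" where
  "qmc_phi d Pi Q p as =
     mtrace d (mmult d (W0 p) (foldr (transE d Pi Q) as mone))"

end

theory Submission
  imports Defs
begin

text \<open>Every matrix in the iterated transition expectation is a multiple of a diagonal
  matrix unit: since \<open>P(1)\<close> has unit diagonal for a stochastic matrix, and the
  diagonal of \<open>P(c e\<^sub>k\<^sub>k)\<close> is \<open>c S\<^sub>i\<^sub>k\<close>, one step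
  \<open>E(e\<^sub>j\<^sub>j \<otimes> c e\<^sub>k\<^sub>k) = c \<Pi>\<^sub>j\<^sub>k e\<^sub>j\<^sub>j\<close> multiplies
  the coefficient by a transition probability. Tracing against \<open>W\<^sub>0\<close>
  finally contributes the initial probability.\<close>

definition mdiag :: "(nat \<Rightarrow> complex) \<Rightarrow> cmat" where
  "mdiag f = (\<lambda>k l. if k = l then f k else 0)"

lemma Pmap_mdiag_diagonal:
  assumes "\<forall>k\<in>idx d. 0 \<le> S i k"
  shows "Pmap d S (mdiag f) i i = (\<Sum>k\<in>idx d. complex_of_real (S i k) * f k)"
proof -
  have "Pmap d S (mdiag f) i i
      = (\<Sum>k\<in>idx d. complex_of_real (sqrt (S i k * S i k)) * f k)"
    unfolding Pmap_def mdiag_def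
    by (intro sum.cong refl) (simp add: if_distrib[of "\<lambda>x. _ * x"] idx_def cong: if_cong)
  also have "\<dots> = (\<Sum>k\<in>idx d. complex_of_real (S i k) * f k)"
    using assms by (intro sum.cong refl) (simp add: real_sqrt_mult_self)
  finally show ?thesis .
qed

lemma Pmap_mone_diagonal:
  assumes "stochastic d S" "i \<in> idx d"
  shows "Pmap d S mone i i = 1"
proof -
  have "mone = mdiag (\<lambda>_. 1)" by (simp add: mone_def mdiag_def)
  moreover have "\<forall>k\<in>idx d. 0 \<le> S i k" using assms by (simp add: stochastic_def)
  ultimately have "Pmap d S mone i i = complex_of_real (\<Sum>k\<in>idx d. S i k)"
    using Pmap_mdiag_diagonal[of d S i "\<lambda>_. 1"] by simp
  also have "\<dots> = 1" using assms by (simp add: stochastic_def)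
  finally show ?thesis .
qed

lemma Pmap_munit_diagonal:
  assumes "\<forall>l\<in>idx d. 0 \<le> S i l" "k \<in> idx d"
  shows "Pmap d S (\<lambda>a b. c * munit k k a b) i i = complex_of_real (S i k) * c"
proof -
  have "(\<lambda>a b. c * munit k k a b) = mdiag (\<lambda>l. if l = k then c else 0)"
    by (auto simp: munit_def mdiag_def intro!: ext)
  then show ?thesis
    using assms by (simp add: Pmap_mdiag_diagonal if_distrib[of "\<lambda>x. _ * x"]
        idx_def cong: if_cong)
qed

lemma transE_munit:
  "transE d Pi Q (munit j j) B
     = (\<lambda>a b. Pmap d Q mone j j * Pmap d Pi B j j * munit j j a b)"
  by (auto simp: transE_def schur_def munit_def intro!: ext)

lemma foldr_transE_munits:
  assumes "stochastic d Pi" "stochastic d Q" "a \<le> n" "\<forall>m\<le>n. js m \<in> idx d"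
  shows "foldr (transE d Pi Q) (map (\<lambda>m. munit (js m) (js m)) [a..<Suc n]) mone
       = (\<lambda>x y. complex_of_real (\<Prod>m\<in>{a..<n}. Pi (js m) (js (Suc m))) * munit (js a) (js a) x y)"
  using assms(3)
proof (induction a rule: inc_induct)
  case base
  then show ?case
    using assms by (simp add: transE_munit Pmap_mone_diagonal)
next
  case (step a)
  have "[a..<Suc n] = a # [Suc a..<Suc n]"
    using step.hyps by (simp add: upt_conv_Cons)
  moreover have "(\<Prod>m\<in>{a..<n}. Pi (js m) (js (Suc m)))
      = Pi (js a) (js (Suc a)) * (\<Prod>m\<in>{Suc a..<n}. Pi (js m) (js (Suc m)))"
    using step.hyps by (simp add: prod.atLeast_Suc_lessThan)
  ultimately show ?case
    using assms step by (simp add: transE_munit Pmap_mone_diagonal Pmap_munit_diagonal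
        stochastic_def)
qed

lemma mtrace_W0_mmult:
  "mtrace d (mmult d (W0 p) A) = (\<Sum>i\<in>idx d. complex_of_real (p i) * A i i)"
  unfolding mtrace_def mmult_def W0_def
  by (intro sum.cong refl) (simp add: if_distrib[of "\<lambda>x. x * _"] idx_def cong: if_cong)

lemma mtrace_W0_munit:
  assumes "j \<in> idx d"
  shows "mtrace d (mmult d (W0 p) (\<lambda>x y. c * munit j j x y)) = complex_of_real (p j) * c"
  using assms by (simp add: mtrace_W0_mmult munit_def if_distrib[of "\<lambda>x. _ * x"] idx_def
      cong: if_cong)

theorem mainTheorem9:
  fixes d :: nat and Pi Q :: "nat \<Rightarrow> nat \<Rightarrow> real" and p :: "nat \<Rightarrow> real"
    and n :: nat and js :: "nat \<Rightarrow> nat"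
  assumes "d \<ge> 1"
    and "stochastic d Pi" and "stochastic d Q" and "prob_vector d p"
    and "\<forall>m\<le>n. js m \<in> idx d"
  shows "qmc_phi d Pi Q p (map (\<lambda>m. munit (js m) (js m)) [0..<Suc n])
         = complex_of_real (p (js 0) * (\<Prod>m<n. Pi (js m) (js (Suc m))))"
proof -
  have "qmc_phi d Pi Q p (map (\<lambda>m. munit (js m) (js m)) [0..<Suc n])
      = mtrace d (mmult d (W0 p)
          (\<lambda>x y. complex_of_real (\<Prod>m\<in>{0..<n}. Pi (js m) (js (Suc m))) * munit (js 0) (js 0) x y))"
    unfolding qmc_phi_def using assms(2,3,5) by (simp only: foldr_transE_munits zero_le)
  also have "\<dots> = complex_of_real (p (js 0) * (\<Prod>m<n. Pi (js m) (js (Suc m))))"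
    using assms(5) by (simp add: mtrace_W0_munit atLeast0LessThan)
  finally show ?thesis .
qed

end
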